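(* Let $y\ge1$ be an integer and $\rho\in(0,1)$. For any probability distribution $G$ supported on $\mathbb{R}_+$, $\theta_G(y;\rho)\ge\rho^2/16$.
   Context: $f_G(y)=\int\frac{\theta^ye^{-\theta}}{y!}G(d\theta)$ for $y\in\{0,1,\dots\}$, $\Delta f_G(y)=f_G(y+1)-f_G(y)$, and $\theta_G(y;\rho)=(y+1)\big(\frac{\Delta f_G(y)}{f_G(y)\vee\rho}+1\big)$. *)

theory Defs
  imports "HOL-Probability.Probability"
begin

definition fG :: "real measure \<Rightarrow> nat \<Rightarrow> real" where
  "fG G y = (\<integral>\<theta>. \<theta> ^ y * exp (- \<theta>) / fact y \<partial>G)"

definition DeltafG :: "real measure \<Rightarrow> nat \<Rightarrow> real" where
  "DeltafG G y = fG G (Suc y) - fG G y"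

definition thetaG :: "real measure \<Rightarrow> nat \<Rightarrow> real \<Rightarrow> real" where
  "thetaG G y \<rho> = real (y + 1) * (DeltafG G y / max (fG G y) \<rho> + 1)"

end

theory Submission
  imports Defs
begin

text \<open>Write \<open>p\<^sub>k(\<theta>) = \<theta>\<^sup>k e\<^sup>-\<^sup>\<theta>/k!\<close>, so that \<open>(k+1) p\<^sub>k\<^sub>+\<^sub>1(\<theta>) = \<theta> p\<^sub>k(\<theta>)\<close>.
  For \<open>0 \<le> c \<le> 1\<close> and \<open>k \<ge> 1\<close> one has pointwise \<open>\<theta> p\<^sub>k(\<theta>) \<ge> c p\<^sub>k(\<theta>) - c\<^sup>2\<close>:
  this is trivial for \<open>\<theta> \<ge> c\<close>, and for \<open>\<theta> < c\<close> both \<open>c - \<theta>\<close> and \<open>p\<^sub>k(\<theta>) \<le> \<theta>\<close> are at most \<open>c\<close>.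
  Integrating against \<open>G\<close> gives \<open>(y+1) f\<^sub>G(y+1) \<ge> c f\<^sub>G(y) - c\<^sup>2\<close>.
  Now \<open>\<theta>\<^sub>G(y;\<rho>) = (y+1) f\<^sub>G(y+1)/(f\<^sub>G(y) \<or> \<rho>) + (y+1)(1 - f\<^sub>G(y)/(f\<^sub>G(y) \<or> \<rho>))\<close> is a sum
  of two nonnegative terms. If \<open>f\<^sub>G(y) \<le> \<rho>/2\<close> the second one is at least \<open>1/2\<close>; otherwise,
  with \<open>c = \<rho>/4\<close>, the first one is at least \<open>(y+1) f\<^sub>G(y+1) \<ge> c\<^sup>2 = \<rho>\<^sup>2/16\<close>, since \<open>f\<^sub>G(y) \<le> 1\<close>.\<close>

definition poisson_weight :: "nat \<Rightarrow> real \<Rightarrow> real" where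
  "poisson_weight k \<theta> = \<theta> ^ k * exp (- \<theta>) / fact k"

lemma fG_eq_integral_poisson_weight: "fG G k = (\<integral>\<theta>. poisson_weight k \<theta> \<partial>G)"
  by (simp add: fG_def poisson_weight_def)

lemma power_div_fact_le_exp:
  fixes x :: real
  assumes "0 \<le> x"
  shows "x ^ k / fact k \<le> exp x"
proof -
  have "x ^ k / fact k \<le> (\<Sum>n\<le>k. x ^ n / fact n)"
    using assms by (intro member_le_sum) auto
  also have "\<dots> \<le> exp x"
    using assms summable_exp_generic[of x]
    by (auto simp: exp_def divide_inverse ac_simps intro!: sum_le_suminf)
  finally show ?thesis .
qed

lemma poisson_weight_nonneg: "0 \<le> \<theta> \<Longrightarrow> 0 \<le> poisson_weight k \<theta>"
  by (simp add: poisson_weight_def)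

lemma poisson_weight_le_1:
  assumes "0 \<le> \<theta>"
  shows "poisson_weight k \<theta> \<le> 1"
proof -
  have "poisson_weight k \<theta> = (\<theta> ^ k / fact k) / exp \<theta>"
    by (simp add: poisson_weight_def exp_minus field_simps)
  also have "\<dots> \<le> 1"
    using power_div_fact_le_exp[OF assms, of k] by (subst divide_le_eq_1_pos) auto
  finally show ?thesis .
qed

lemma poisson_weight_Suc: "real (Suc k) * poisson_weight (Suc k) \<theta> = \<theta> * poisson_weight k \<theta>"
  by (simp add: poisson_weight_def field_simps del: of_nat_Suc)

lemma poisson_weight_le_self:
  assumes "0 \<le> \<theta>" "\<theta> \<le> 1" "k \<ge> 1"
  shows "poisson_weight k \<theta> \<le> \<theta>"
proof -
  have "poisson_weight k \<theta> \<le> \<theta> ^ k * exp (- \<theta>)"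
    using assms(1) divide_left_mono[of 1 "fact k" "\<theta> ^ k * exp (- \<theta>)"]
    unfolding poisson_weight_def by simp
  also have "\<dots> \<le> \<theta> ^ k"
    using assms(1) by (simp add: mult_left_le)
  also have "\<dots> \<le> \<theta> ^ 1"
    using assms by (intro power_decreasing) auto
  finally show ?thesis by simp
qed

lemma poisson_weight_Suc_lower_bound:
  assumes "0 \<le> \<theta>" "k \<ge> 1" "0 \<le> c" "c \<le> 1"
  shows "c * poisson_weight k \<theta> - c\<^sup>2 \<le> real (Suc k) * poisson_weight (Suc k) \<theta>"
proof (cases "c \<le> \<theta>")
  case True
  then have "c * poisson_weight k \<theta> \<le> \<theta> * poisson_weight k \<theta>"
    using poisson_weight_nonneg[OF assms(1)] by (rule mult_right_mono)
  then show ?thesis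
    unfolding poisson_weight_Suc using zero_le_power2[of c] by linarith
next
  case False
  then have "poisson_weight k \<theta> \<le> c"
    using poisson_weight_le_self[of \<theta> k] assms by auto
  then have "(c - \<theta>) * poisson_weight k \<theta> \<le> c * c"
    using False assms poisson_weight_nonneg[OF assms(1), of k] by (intro mult_mono) auto
  then show ?thesis
    unfolding poisson_weight_Suc by (simp add: power2_eq_square algebra_simps)
qed

locale nonneg_prob_space = prob_space G for G :: "real measure" +
  assumes sets_eq_borel: "sets G = sets borel"
    and AE_nonneg: "AE \<theta> in G. 0 \<le> \<theta>"
begin

lemma integrable_poisson_weight: "integrable G (poisson_weight k)"
proof (rule integrable_const_bound[where B = 1])
  show "AE \<theta> in G. norm (poisson_weight k \<theta>) \<le> 1"
    using AE_nonneg by eventually_elim (simp add: poisson_weight_nonneg poisson_weight_le_1)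
  show "poisson_weight k \<in> borel_measurable G"
    unfolding poisson_weight_def measurable_cong_sets[OF sets_eq_borel refl] by measurable
qed

lemma fG_nonneg: "0 \<le> fG G k"
  unfolding fG_eq_integral_poisson_weight
  using AE_nonneg by (intro integral_nonneg_AE) (auto elim!: eventually_mono simp: poisson_weight_nonneg)

lemma fG_le_1: "fG G k \<le> 1"
proof -
  have "fG G k \<le> (\<integral>\<theta>. 1 \<partial>G)"
    unfolding fG_eq_integral_poisson_weight using AE_nonneg
    by (intro integral_mono_AE integrable_poisson_weight)
       (auto elim!: eventually_mono simp: poisson_weight_le_1)
  then show ?thesis by (simp add: prob_space)
qed

lemma fG_Suc_lower_bound:
  assumes "k \<ge> 1" "0 \<le> c" "c \<le> 1"
  shows "c * fG G k - c\<^sup>2 \<le> real (Suc k) * fG G (Suc k)"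
proof -
  have "c * fG G k - c\<^sup>2 = (\<integral>\<theta>. c * poisson_weight k \<theta> - c\<^sup>2 \<partial>G)"
    using integrable_poisson_weight by (simp add: fG_eq_integral_poisson_weight prob_space)
  also have "\<dots> \<le> (\<integral>\<theta>. real (Suc k) * poisson_weight (Suc k) \<theta> \<partial>G)"
  proof (rule integral_mono_AE)
    show "AE \<theta> in G. c * poisson_weight k \<theta> - c\<^sup>2 \<le> real (Suc k) * poisson_weight (Suc k) \<theta>"
      using AE_nonneg by eventually_elim (rule poisson_weight_Suc_lower_bound[OF _ assms])
  qed (use integrable_poisson_weight in auto)
  also have "\<dots> = real (Suc k) * fG G (Suc k)"
    by (simp add: fG_eq_integral_poisson_weight)
  finally show ?thesis .
qed

end

lemma regularized_robbins_lower_bound: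
  fixes f f' \<rho> :: real and n :: nat
  assumes "0 \<le> f" "f \<le> 1" "0 \<le> f'" "n \<ge> 1" "0 < \<rho>" "\<rho> < 1"
    and lower: "\<rho>/4 * f - (\<rho>/4)\<^sup>2 \<le> n * f'"
  shows "\<rho>\<^sup>2 / 16 \<le> n * ((f' - f) / max f \<rho> + 1)"
proof -
  define m where "m = max f \<rho>"
  have m: "0 < m" "m \<le> 1" "f \<le> m"
    using assms unfolding m_def by auto
  have split: "n * ((f' - f) / m + 1) = n * f' / m + n * (1 - f / m)"
    using m by (simp add: field_simps)
  have first: "0 \<le> n * f' / m" and second: "0 \<le> n * (1 - f / m)"
    using m assms by auto
  show ?thesis
  proof (cases "f \<le> \<rho> / 2")
    case True
    then have "1 / 2 \<le> 1 - f / m"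
      using assms m_def by (simp add: field_simps)
    moreover have "1 - f / m \<le> n * (1 - f / m)"
      using assms(4) m mult_right_mono[of 1 "real n" "1 - f / m"] by simp
    moreover have "\<rho>\<^sup>2 \<le> 1"
      using assms by (intro power_le_one) auto
    ultimately show ?thesis
      using split first unfolding m_def by linarith
  next
    case False
    then have "(\<rho>/4)\<^sup>2 \<le> \<rho>/4 * f - (\<rho>/4)\<^sup>2"
      using assms by (simp add: power2_eq_square field_simps)
    also have "\<dots> \<le> n * f'" by (fact lower)
    also have "\<dots> \<le> n * f' / m"
      using m assms by (simp add: le_divide_eq mult_left_le)
    finally show ?thesis
      using split second unfolding m_def by (simp add: power2_eq_square)
  qed
qed

theorem lemma4:
  fixes G :: "real measure" and y :: nat and \<rho> :: real
  assumes "prob_space G" and "sets G = sets borel"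
    and "AE \<theta> in G. \<theta> \<ge> 0"
    and "y \<ge> 1" and "0 < \<rho>" and "\<rho> < 1"
  shows "thetaG G y \<rho> \<ge> \<rho>\<^sup>2 / 16"
proof -
  interpret nonneg_prob_space G
    using assms(1-3) by (simp add: nonneg_prob_space_def nonneg_prob_space_axioms_def)
  have "\<rho>/4 * fG G y - (\<rho>/4)\<^sup>2 \<le> real (Suc y) * fG G (Suc y)"
    using assms(4-6) by (intro fG_Suc_lower_bound) auto
  then have "\<rho>\<^sup>2 / 16 \<le> real (Suc y) * ((fG G (Suc y) - fG G y) / max (fG G y) \<rho> + 1)"
    using assms(5,6) fG_nonneg fG_le_1 by (intro regularized_robbins_lower_bound) auto
  then show ?thesis
    by (simp add: thetaG_def DeltafG_def)
qed

end
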